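(* Let $d\ge 3$, let $A$ be a $d$-dimensional $(0,1)$-matrix of order $4$ equivalent to $\mathcal{M}_4^d$, and let $C$ be a filled subcube of $A$. Let $B$ be the $(0,1)$-matrix obtained from $A$ by changing exactly one zero entry lying in $C$ to $1$. Then $\operatorname{per}B>0$.
   Context: $\mathcal{M}_4^d$ has entry $1$ at $\alpha$ iff $\alpha_1+\dots+\alpha_d\equiv 0\pmod 4$, else $0$. Equivalence of matrices: obtained by permuting coordinate positions and/or applying a permutation of $\{0,1,2,3\}$ to a single coordinate, repeatedly. A diagonal is a set of $4$ indices any two of which differ in every coordinate; $\operatorname{per}B=\sum_p\prod_{\alpha\in p}b_\alpha$ over diagonals. Define $p_1,p_2,p_3:\{0,1,2,3\}\to\{0,1\}$ by $p_1(0)=p_1(1)=0,\ p_1(2)=p_1(3)=1$; $p_2(0)=p_2(2)=0,\ p_2(1)=p_2(3)=1$; $p_3(0)=p_3(3)=0,\ p_3(1)=p_3(2)=1$; and $\mu_1(0)=\mu_1(2)=0,\ \mu_1(1)=\mu_1(3)=1$; $\mu_2(0)=\mu_2(1)=0,\ \mu_2(2)=\mu_2(3)=1$; $\mu_3(0)=\mu_3(2)=0,\ \mu_3(1)=\mu_3(3)=1$. $Q_s^d=\{y\in\{0,1\}^d:w(y)\equiv s \pmod 2\}$ ($w$ = Hamming weight). For $\mathcal{E}\in\{1,2,3\}^d$, $s\in\{0,1\}$, $\lambda:Q_s^d\to\{0,1\}$, the block permutation with parameters $(\mathcal{E},\lambda,s)$ is the $(0,1)$-matrix with entry $1$ at $\alpha$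 iff $\bigoplus_i p_{\varepsilon_i}(\alpha_i)=s$ and $\bigoplus_i\mu_{\varepsilon_i}(\alpha_i)\oplus\lambda(p_{\varepsilon_1}(\alpha_1),\dots,p_{\varepsilon_d}(\alpha_d))=0$. Every matrix equivalent to $\mathcal{M}_4^d$ ($d\ge3$) is a block permutation for a unique triple of parameters $(\mathcal{E},\lambda,s)$. For these parameters, the subcubes are the index sets $C_y=\{\alpha:p_{\varepsilon_i}(\alpha_i)=y_i\ \forall i\}$, $y\in\{0,1\}^d$, and $C_y$ is called filled if $w(y)\equiv s\pmod 2$. *)

theory Defs
  imports "HOL-Combinatorics.Permutations"
begin

text \<open>A d-dimensional matrix of order 4 is a function on index lists; only its values on
  the index set idx d = {0,1,2,3}^d (lists of length d with entries < 4) matter.\<close>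

definition idx :: "nat \<Rightarrow> nat list set" where
  "idx d = {\<alpha>. length \<alpha> = d \<and> (\<forall>i<d. \<alpha> ! i < 4)}"

definition M4 :: "nat \<Rightarrow> nat list \<Rightarrow> nat" where
  "M4 d \<alpha> = (if (\<Sum>i<d. \<alpha> ! i) mod 4 = 0 then 1 else 0)"

inductive equivM4 :: "nat \<Rightarrow> (nat list \<Rightarrow> nat) \<Rightarrow> bool" for d where
  base: "equivM4 d (M4 d)"
| coord_perm: "equivM4 d A \<Longrightarrow> \<pi> permutes {..<d} \<Longrightarrow>
      equivM4 d (\<lambda>\<alpha>. A (map (\<lambda>j. \<alpha> ! \<pi> j) [0..<d]))"
| value_perm: "equivM4 d A \<Longrightarrow> \<sigma> permutes {..<4} \<Longrightarrow> i < d \<Longrightarrow>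
      equivM4 d (\<lambda>\<alpha>. A (\<alpha>[i := \<sigma> (\<alpha> ! i)]))"
| agree: "equivM4 d A \<Longrightarrow> (\<forall>\<alpha>\<in>idx d. B \<alpha> = A \<alpha>) \<Longrightarrow> equivM4 d B"

definition diagonals :: "nat \<Rightarrow> nat list set set" where
  "diagonals d = {p. p \<subseteq> idx d \<and> card p = 4 \<and>
      (\<forall>\<alpha>\<in>p. \<forall>\<beta>\<in>p. \<alpha> \<noteq> \<beta> \<longrightarrow> (\<forall>i<d. \<alpha> ! i \<noteq> \<beta> ! i))}"

definition per :: "nat \<Rightarrow> (nat list \<Rightarrow> nat) \<Rightarrow> nat" where
  "per d B = (\<Sum>p\<in>diagonals d. \<Prod>\<alpha>\<in>p. B \<alpha>)"

definition pf :: "nat \<Rightarrow> nat \<Rightarrow> nat" where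
  "pf e x = (if e = 1 then (if x = 2 \<or> x = 3 then 1 else 0)
             else if e = 2 then (if x = 1 \<or> x = 3 then 1 else 0)
             else (if x = 1 \<or> x = 2 then 1 else 0))"

definition muf :: "nat \<Rightarrow> nat \<Rightarrow> nat" where
  "muf e x = (if e = 2 then (if x = 2 \<or> x = 3 then 1 else 0)
              else (if x = 1 \<or> x = 3 then 1 else 0))"

definition binvecs :: "nat \<Rightarrow> nat list set" where
  "binvecs d = {y. length y = d \<and> (\<forall>i<d. y ! i \<le> 1)}"

definition Qs :: "nat \<Rightarrow> nat \<Rightarrow> nat list set" where
  "Qs d s = {y \<in> binvecs d. (\<Sum>i<d. y ! i) mod 2 = s}"

definition valid_params :: "nat \<Rightarrow> nat list \<Rightarrow> (nat list \<Rightarrow> nat) \<Rightarrow> nat \<Rightarrow> bool" where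
  "valid_params d E lam s \<longleftrightarrow> length E = d \<and> (\<forall>i<d. E ! i \<in> {1,2,3}) \<and> s \<in> {0,1} \<and>
      (\<forall>y\<in>Qs d s. lam y \<in> {0,1})"

definition pvec :: "nat \<Rightarrow> nat list \<Rightarrow> nat list \<Rightarrow> nat list" where
  "pvec d E \<alpha> = map (\<lambda>i. pf (E ! i) (\<alpha> ! i)) [0..<d]"

definition block_perm :: "nat \<Rightarrow> nat list \<Rightarrow> (nat list \<Rightarrow> nat) \<Rightarrow> nat \<Rightarrow> nat list \<Rightarrow> nat" where
  "block_perm d E lam s \<alpha> =
     (if (\<Sum>i<d. pf (E ! i) (\<alpha> ! i)) mod 2 = s \<and>
         ((\<Sum>i<d. muf (E ! i) (\<alpha> ! i)) + lam (pvec d E \<alpha>)) mod 2 = 0 then 1 else 0)"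

definition subcube :: "nat \<Rightarrow> nat list \<Rightarrow> nat list \<Rightarrow> nat list set" where
  "subcube d E y = {\<alpha>\<in>idx d. \<forall>i<d. pf (E ! i) (\<alpha> ! i) = y ! i}"

definition filled :: "nat \<Rightarrow> nat \<Rightarrow> nat list \<Rightarrow> bool" where
  "filled d s y \<longleftrightarrow> y \<in> binvecs d \<and> (\<Sum>i<d. y ! i) mod 2 = s"

end

theory Submission
  imports Defs
begin

(*
  A matrix equivalent to M_4^d is M_4^d composed with a relabelling T of the index cube (a
  permutation of the positions together with a permutation of the symbols in each position), and
  T maps diagonals onto diagonals. So it suffices to find a diagonal of M_4^d whose entries other
  than x = T(alpha0) are 1.

  Let S be the coordinate sum of x; S is not divisible by 4 since A(alpha0) = 0. Lowering one
  coordinate of x by S (mod 4) gives a 1 of M_4^d. Inside the filled subcube of alpha0 the 1s are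
  exactly the indices whose mu-values differ from those of alpha0 in an odd number of positions,
  and a change of one coordinate of alpha0 that produces a 1 stays in the subcube and flips exactly
  one mu-value. Hence three such changes in distinct coordinates, made together, again give a 1.
  Its image has coordinate sum S - 3S = -2S mod 4, so S = 2 mod 4.

  For even d the vectors (j, -j, j, -j, ...), j = 0..3, form a diagonal of 1s. For odd d >= 3 the
  vectors x + c_j form a diagonal through x, where c_0 = 0 and c_1, c_2, c_3 have entries in
  {1,2,3}, differ in every coordinate and have coordinate sums 2 mod 4.
*)

definition relabel :: "nat \<Rightarrow> (nat \<Rightarrow> nat) \<Rightarrow> (nat \<Rightarrow> nat \<Rightarrow> nat) \<Rightarrow> nat list \<Rightarrow> nat list" where
  "relabel d \<pi> f \<alpha> = map (\<lambda>j. f j (\<alpha> ! \<pi> j)) [0..<d]"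

definition is_relabelling :: "nat \<Rightarrow> (nat \<Rightarrow> nat) \<Rightarrow> (nat \<Rightarrow> nat \<Rightarrow> nat) \<Rightarrow> bool" where
  "is_relabelling d \<pi> f \<longleftrightarrow> \<pi> permutes {..<d} \<and> (\<forall>j<d. f j permutes {..<4})"

lemma permutes_lessThan_less: "\<pi> permutes {..<n} \<Longrightarrow> x < n \<Longrightarrow> \<pi> x < n"
  using permutes_in_image by fastforce

lemma permutes_lessThan_all_iff:
  "\<pi> permutes {..<n} \<Longrightarrow> (\<forall>j<n. P (\<pi> j)) \<longleftrightarrow> (\<forall>l<n. P l)"
  by (metis permutes_inverses(1) permutes_inv permutes_lessThan_less)

lemma idx_length: "\<alpha> \<in> idx d \<Longrightarrow> length \<alpha> = d"
  by (simp add: idx_def)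

lemma idx_nth_less: "\<alpha> \<in> idx d \<Longrightarrow> i < d \<Longrightarrow> \<alpha> ! i < 4"
  by (simp add: idx_def)

lemma idx_list_update: "\<alpha> \<in> idx d \<Longrightarrow> a < 4 \<Longrightarrow> \<alpha>[i := a] \<in> idx d"
  by (cases "i < length \<alpha>") (auto simp: idx_def nth_list_update list_update_beyond)

lemma finite_idx: "finite (idx d)"
proof -
  have "idx d \<subseteq> {xs. set xs \<subseteq> {..<4} \<and> length xs = d}"
    by (auto simp: idx_def in_set_conv_nth)
  then show ?thesis
    using finite_lists_length_eq[of "{..<4::nat}" d] finite_subset by blast
qed

lemma length_relabel [simp]: "length (relabel d \<pi> f \<alpha>) = d"
  by (simp add: relabel_def)

lemma nth_relabel [simp]: "j < d \<Longrightarrow> relabel d \<pi> f \<alpha> ! j = f j (\<alpha> ! \<pi> j)"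
  by (simp add: relabel_def)

lemma relabel_in_idx: "is_relabelling d \<pi> f \<Longrightarrow> \<alpha> \<in> idx d \<Longrightarrow> relabel d \<pi> f \<alpha> \<in> idx d"
  by (auto simp: is_relabelling_def idx_def permutes_lessThan_less)

lemma relabel_list_update:
  assumes "is_relabelling d \<pi> f" "length \<alpha> = d" "l < d"
  shows "relabel d \<pi> f (\<alpha>[\<pi> l := a]) = (relabel d \<pi> f \<alpha>)[l := f l a]"
proof -
  have \<pi>: "\<pi> permutes {..<d}" "inj \<pi>"
    using assms(1) permutes_inj by (auto simp: is_relabelling_def)
  then show ?thesis
    using assms(2,3) permutes_lessThan_less[OF \<pi>(1)]
    by (auto intro!: nth_equalityI simp: nth_list_update inj_eq)
qed

lemma relabel_nth_eq_iff:
  assumes "is_relabelling d \<pi> f" "j < d"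
  shows "relabel d \<pi> f \<alpha> ! j = relabel d \<pi> f \<beta> ! j \<longleftrightarrow> \<alpha> ! \<pi> j = \<beta> ! \<pi> j"
proof -
  have "inj (f j)" using assms permutes_inj by (auto simp: is_relabelling_def)
  then show ?thesis using assms(2) by (simp add: inj_eq)
qed

lemma relabel_differ_iff:
  assumes "is_relabelling d \<pi> f"
  shows "(\<forall>j<d. relabel d \<pi> f \<alpha> ! j \<noteq> relabel d \<pi> f \<beta> ! j) \<longleftrightarrow> (\<forall>l<d. \<alpha> ! l \<noteq> \<beta> ! l)"
proof -
  have "\<pi> permutes {..<d}" using assms by (simp add: is_relabelling_def)
  then show ?thesis
    using relabel_nth_eq_iff[OF assms] permutes_lessThan_all_iff[of \<pi> d "\<lambda>l. \<alpha> ! l \<noteq> \<beta> ! l"]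
    by simp
qed

lemma inj_on_relabel:
  assumes "is_relabelling d \<pi> f"
  shows "inj_on (relabel d \<pi> f) (idx d)"
proof
  fix \<alpha> \<beta> assume \<alpha>: "\<alpha> \<in> idx d" and \<beta>: "\<beta> \<in> idx d" and eq: "relabel d \<pi> f \<alpha> = relabel d \<pi> f \<beta>"
  have \<pi>: "\<pi> permutes {..<d}" using assms by (simp add: is_relabelling_def)
  have "\<forall>j<d. \<alpha> ! \<pi> j = \<beta> ! \<pi> j"
    using relabel_nth_eq_iff[OF assms] eq by metis
  then have "\<alpha> ! l = \<beta> ! l" if "l < d" for l
    using permutes_lessThan_all_iff[OF \<pi>, of "\<lambda>l. \<alpha> ! l = \<beta> ! l"] that by simp
  then show "\<alpha> = \<beta>"
    using \<alpha> \<beta> by (auto intro: nth_equalityI simp: idx_length)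
qed

lemma relabel_surj:
  assumes "is_relabelling d \<pi> f" "x \<in> idx d"
  shows "x \<in> relabel d \<pi> f ` idx d"
proof
  have \<pi>: "\<pi> permutes {..<d}" and f: "\<And>j. j < d \<Longrightarrow> f j permutes {..<4}"
    using assms(1) by (auto simp: is_relabelling_def)
  define \<beta> where "\<beta> = map (\<lambda>l. inv (f (inv \<pi> l)) (x ! inv \<pi> l)) [0..<d]"
  have inv\<pi>: "inv \<pi> l < d" if "l < d" for l
    using permutes_lessThan_less[OF permutes_inv[OF \<pi>] that] .
  have "\<beta> ! l < 4" if "l < d" for l
    using permutes_lessThan_less[OF permutes_inv[OF f[OF inv\<pi>]] idx_nth_less[OF assms(2)]]
      inv\<pi> that by (simp add: \<beta>_def)
  then show "\<beta> \<in> idx d" by (simp add: idx_def \<beta>_def)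
  have "relabel d \<pi> f \<beta> ! j = x ! j" if "j < d" for j
  proof -
    have "relabel d \<pi> f \<beta> ! j = f j (inv (f j) (x ! j))"
      using that permutes_lessThan_less[OF \<pi>] permutes_inverses(2)[OF \<pi>] by (simp add: \<beta>_def)
    also have "\<dots> = x ! j" using permutes_inverses(1)[OF f[OF that]] .
    finally show ?thesis .
  qed
  then show "x = relabel d \<pi> f \<beta>"
    using idx_length[OF assms(2)] by (auto intro: nth_equalityI)
qed

lemma equivM4_relabel:
  assumes "equivM4 d A"
  shows "\<exists>\<pi> f. is_relabelling d \<pi> f \<and> (\<forall>\<alpha>\<in>idx d. A \<alpha> = M4 d (relabel d \<pi> f \<alpha>))"
  using assms
proof (induction rule: equivM4.induct)
  case base
  have "relabel d id (\<lambda>_. id) \<alpha> = \<alpha>" if "\<alpha> \<in> idx d" for \<alpha>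
    using that by (auto intro!: nth_equalityI simp: idx_def)
  then show ?case
    by (metis is_relabelling_def permutes_id)
next
  case (coord_perm A \<sigma>)
  then obtain \<pi> f where rel: "is_relabelling d \<pi> f"
    and A: "\<forall>\<alpha>\<in>idx d. A \<alpha> = M4 d (relabel d \<pi> f \<alpha>)" by blast
  have "is_relabelling d (\<sigma> \<circ> \<pi>) f"
    using rel coord_perm(2) permutes_compose by (auto simp: is_relabelling_def)
  moreover have "A (map (\<lambda>j. \<alpha> ! \<sigma> j) [0..<d]) = M4 d (relabel d (\<sigma> \<circ> \<pi>) f \<alpha>)"
    if "\<alpha> \<in> idx d" for \<alpha>
  proof -
    have "map (\<lambda>j. \<alpha> ! \<sigma> j) [0..<d] \<in> idx d"
      using that coord_perm(2) by (auto simp: idx_def permutes_lessThan_less)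
    moreover have "relabel d \<pi> f (map (\<lambda>j. \<alpha> ! \<sigma> j) [0..<d]) = relabel d (\<sigma> \<circ> \<pi>) f \<alpha>"
      using rel by (auto simp: relabel_def is_relabelling_def permutes_lessThan_less)
    ultimately show ?thesis using A by simp
  qed
  ultimately show ?case by blast
next
  case (value_perm A \<sigma> i)
  then obtain \<pi> f where rel: "is_relabelling d \<pi> f"
    and A: "\<forall>\<alpha>\<in>idx d. A \<alpha> = M4 d (relabel d \<pi> f \<alpha>)" by blast
  define f' where "f' j = (if \<pi> j = i then f j \<circ> \<sigma> else f j)" for j
  have "is_relabelling d \<pi> f'"
    using rel value_perm(2) permutes_compose by (auto simp: is_relabelling_def f'_def)
  moreover have "A (\<alpha>[i := \<sigma> (\<alpha> ! i)]) = M4 d (relabel d \<pi> f' \<alpha>)" if "\<alpha> \<in> idx d" for \<alpha>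
  proof -
    have "\<alpha>[i := \<sigma> (\<alpha> ! i)] \<in> idx d"
      using that value_perm(2,3) by (auto intro: idx_list_update permutes_lessThan_less idx_nth_less)
    moreover have "relabel d \<pi> f (\<alpha>[i := \<sigma> (\<alpha> ! i)]) = relabel d \<pi> f' \<alpha>"
      using rel that permutes_lessThan_less[of \<pi> d]
      by (auto simp: relabel_def is_relabelling_def f'_def idx_def nth_list_update)
    ultimately show ?thesis using A by simp
  qed
  ultimately show ?case by blast
next
  case (agree A B)
  then show ?case by metis
qed

lemma per_pos_of_diagonal:
  assumes "D \<in> diagonals d" "\<forall>\<beta>\<in>D. B \<beta> > 0"
  shows "per d B > 0"
proof -
  have fin: "finite (diagonals d)"
    using finite_idx by (auto simp: diagonals_def intro: finite_subset[of _ "Pow (idx d)"])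
  have "prod B D \<le> per d B"
    unfolding per_def by (rule member_le_sum[OF assms(1) _ fin]) simp
  moreover have "prod B D > 0" using assms(2) by (simp add: prod_pos)
  ultimately show ?thesis by simp
qed

lemma diagonal_relabel_preimage:
  assumes rel: "is_relabelling d \<pi> f" and D: "D \<in> diagonals d"
  shows "\<exists>D'\<in>diagonals d. relabel d \<pi> f ` D' = D"
proof
  let ?T = "relabel d \<pi> f"
  define D' where "D' = {\<beta> \<in> idx d. ?T \<beta> \<in> D}"
  have D_idx: "D \<subseteq> idx d" using D by (simp add: diagonals_def)
  show image: "?T ` D' = D"
    using relabel_surj[OF rel] D_idx by (auto simp: D'_def)
  have inj: "inj_on ?T D'"
    using inj_on_relabel[OF rel] by (rule inj_on_subset) (auto simp: D'_def)
  have "card D' = 4"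
    using card_image[OF inj] image D by (simp add: diagonals_def)
  moreover have "\<forall>l<d. \<alpha> ! l \<noteq> \<beta> ! l" if "\<alpha> \<in> D'" "\<beta> \<in> D'" "\<alpha> \<noteq> \<beta>" for \<alpha> \<beta>
  proof -
    have "?T \<alpha> \<noteq> ?T \<beta>" using inj that by (auto dest: inj_onD)
    then have "\<forall>j<d. ?T \<alpha> ! j \<noteq> ?T \<beta> ! j"
      using D that unfolding diagonals_def D'_def by blast
    then show ?thesis using relabel_differ_iff[OF rel] by blast
  qed
  ultimately show "D' \<in> diagonals d" by (auto simp: diagonals_def D'_def)
qed

lemma per_update_pos_of_relabelled_diagonal:
  assumes rel: "is_relabelling d \<pi> f"
    and A: "\<forall>\<alpha>\<in>idx d. A \<alpha> = M4 d (relabel d \<pi> f \<alpha>)"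
    and \<alpha>0: "\<alpha>0 \<in> idx d"
    and D: "D \<in> diagonals d" "\<forall>z\<in>D. z = relabel d \<pi> f \<alpha>0 \<or> M4 d z = 1"
  shows "per d (A(\<alpha>0 := 1)) > 0"
proof -
  obtain D' where D': "D' \<in> diagonals d" "relabel d \<pi> f ` D' = D"
    using diagonal_relabel_preimage[OF rel D(1)] by blast
  have "(A(\<alpha>0 := 1)) \<beta> > 0" if "\<beta> \<in> D'" for \<beta>
  proof -
    have \<beta>: "\<beta> \<in> idx d" using D'(1) that by (auto simp: diagonals_def)
    have "\<beta> = \<alpha>0 \<or> A \<beta> = 1"
      using D(2) D'(2) that A \<beta> inj_on_relabel[OF rel] \<alpha>0 by (auto dest: inj_onD)
    then show ?thesis by auto
  qed
  then show ?thesis using per_pos_of_diagonal[OF D'(1)] by blast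
qed

lemma mod_add_left_cancel_nat:
  fixes a x y n :: nat
  shows "(a + x) mod n = (a + y) mod n \<longleftrightarrow> x mod n = y mod n"
proof -
  have "(a + x) mod n = (a + y) mod n \<longleftrightarrow> int (a + x) mod int n = int (a + y) mod int n"
    by (metis of_nat_eq_iff zmod_int)
  also have "\<dots> \<longleftrightarrow> int x mod int n = int y mod int n"
    by (simp add: mod_eq_dvd_iff)
  also have "\<dots> \<longleftrightarrow> x mod n = y mod n"
    by (metis of_nat_eq_iff zmod_int)
  finally show ?thesis .
qed

definition shift :: "nat \<Rightarrow> nat list \<Rightarrow> (nat \<Rightarrow> nat) \<Rightarrow> nat list" where
  "shift d x c = map (\<lambda>i. (x ! i + c i) mod 4) [0..<d]"

lemma shift_in_idx: "shift d x c \<in> idx d"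
  by (simp add: shift_def idx_def)

lemma shift_zero:
  assumes "x \<in> idx d" "\<forall>i<d. c i mod 4 = 0"
  shows "shift d x c = x"
proof (rule nth_equalityI)
  show "length (shift d x c) = length x" by (simp add: shift_def idx_length[OF assms(1)])
  fix i assume "i < length (shift d x c)"
  then have "i < d" by (simp add: shift_def)
  then have "(x ! i + c i mod 4) mod 4 = x ! i" using assms by (simp add: idx_nth_less)
  then show "shift d x c ! i = x ! i" using \<open>i < d\<close> by (simp add: shift_def mod_add_right_eq)
qed

lemma M4_shift:
  "M4 d (shift d x c) = (if ((\<Sum>i<d. x ! i) + (\<Sum>i<d. c i)) mod 4 = 0 then 1 else 0)"
proof -
  have "(\<Sum>i<d. shift d x c ! i) mod 4 = (\<Sum>i<d. x ! i + c i) mod 4"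
    by (simp add: shift_def mod_sum_eq)
  then show ?thesis by (simp add: M4_def sum.distrib)
qed

lemma shift_diagonal:
  fixes c :: "nat \<Rightarrow> nat \<Rightarrow> nat"
  assumes "0 < d"
    and c: "\<And>i j k. i < d \<Longrightarrow> j < 4 \<Longrightarrow> k < 4 \<Longrightarrow> j \<noteq> k \<Longrightarrow> c j i mod 4 \<noteq> c k i mod 4"
  shows "(\<lambda>j. shift d x (c j)) ` {..<4} \<in> diagonals d"
proof -
  have differ: "\<forall>i<d. shift d x (c j) ! i \<noteq> shift d x (c k) ! i"
    if "j < 4" "k < 4" "j \<noteq> k" for j k
  proof (intro allI impI)
    fix i assume "i < d"
    then have "c j i mod 4 \<noteq> c k i mod 4" using c that by blast
    then show "shift d x (c j) ! i \<noteq> shift d x (c k) ! i"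
      using \<open>i < d\<close> by (simp add: shift_def mod_add_left_cancel_nat)
  qed
  then have "inj_on (\<lambda>j. shift d x (c j)) {..<4}"
    using \<open>0 < d\<close> by (intro inj_onI) (metis lessThan_iff)
  then have "card ((\<lambda>j. shift d x (c j)) ` {..<4}) = 4"
    by (simp add: card_image)
  then show ?thesis
    using differ by (auto simp: diagonals_def shift_in_idx)
qed

lemma sum_lessThan_pairs:
  fixes g :: "nat \<Rightarrow> nat"
  assumes "\<And>t. g (n + 2 * t) + g (Suc (n + 2 * t)) = c"
  shows "(\<Sum>i<n + 2 * m. g i) = (\<Sum>i<n. g i) + m * c"
proof (induction m)
  case (Suc m)
  have "n + 2 * Suc m = Suc (Suc (n + 2 * m))" by simp
  then show ?case using Suc assms[of m] by simp
qed simp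

definition even_shift :: "nat \<Rightarrow> nat \<Rightarrow> nat" where
  "even_shift j i = (if even i then j else 4 - j)"

(* For j = 1, 2, 3: a Latin square on {1,2,3} in the first three coordinates (row sums 6),
   then alternately j and 4 - j. *)
definition odd_shift :: "nat \<Rightarrow> nat \<Rightarrow> nat" where
  "odd_shift j i = (if j = 0 then 0 else if i < 3 then (j + i) mod 3 + 1
                    else if odd i then j else 4 - j)"

lemma less_4_cases: "(j::nat) < 4 \<Longrightarrow> j = 0 \<or> j = 1 \<or> j = 2 \<or> j = 3"
  by linarith

lemma even_shift_distinct:
  "j < 4 \<Longrightarrow> k < 4 \<Longrightarrow> j \<noteq> k \<Longrightarrow> even_shift j i mod 4 \<noteq> even_shift k i mod 4"
  by (auto simp: even_shift_def dest!: less_4_cases)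

lemma odd_shift_distinct:
  assumes "j < 4" "k < 4" "j \<noteq> k"
  shows "odd_shift j i mod 4 \<noteq> odd_shift k i mod 4"
proof (cases "i < 3")
  case True
  then have "i = 0 \<or> i = 1 \<or> i = 2" by linarith
  then show ?thesis using assms by (auto simp: odd_shift_def dest!: less_4_cases)
next
  case False
  then show ?thesis using assms by (auto simp: odd_shift_def)
qed

lemma sum_even_shift: "j \<le> 4 \<Longrightarrow> (\<Sum>i<2 * m. even_shift j i) = 4 * m"
  using sum_lessThan_pairs[where n=0 and g="even_shift j" and c=4] by (simp add: even_shift_def)

lemma sum_odd_shift:
  assumes "j \<in> {1, 2, 3}"
  shows "(\<Sum>i<3 + 2 * m. odd_shift j i) = 6 + 4 * m"
proof -
  have "(\<Sum>i<3. odd_shift j i) = odd_shift j 0 + odd_shift j 1 + odd_shift j 2"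
    by (simp add: numeral_3_eq_3 numeral_2_eq_2)
  also have "\<dots> = 6" using assms by (auto simp: odd_shift_def)
  finally show ?thesis
    using sum_lessThan_pairs[where n=3 and g="odd_shift j" and c=4] assms
    by (auto simp: odd_shift_def)
qed

lemma M4_even_all_ones_diagonal:
  assumes "even d" "0 < d"
  shows "\<exists>D\<in>diagonals d. \<forall>z\<in>D. M4 d z = 1"
proof
  let ?D = "(\<lambda>j. shift d (replicate d 0) (even_shift j)) ` {..<4}"
  show "?D \<in> diagonals d"
    using shift_diagonal[OF \<open>0 < d\<close>] even_shift_distinct by blast
  obtain m where "d = 2 * m" using \<open>even d\<close> by blast
  then show "\<forall>z\<in>?D. M4 d z = 1"
    by (auto simp: M4_shift sum_even_shift)
qed

lemma M4_odd_diagonal_through: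
  assumes "odd d" "3 \<le> d" "x \<in> idx d" "(\<Sum>i<d. x ! i) mod 4 = 2"
  shows "\<exists>D\<in>diagonals d. \<forall>z\<in>D. z = x \<or> M4 d z = 1"
proof
  let ?D = "(\<lambda>j. shift d x (odd_shift j)) ` {..<4}"
  show "?D \<in> diagonals d"
    using shift_diagonal[of d odd_shift] odd_shift_distinct \<open>3 \<le> d\<close> by auto
  obtain k where "d = 2 * k + 1" using \<open>odd d\<close> by (rule oddE)
  then have m: "d = 3 + 2 * (k - 1)" using \<open>3 \<le> d\<close> by simp
  have one: "M4 d (shift d x (odd_shift j)) = 1" if "0 < j" "j < 4" for j
  proof -
    have "j \<in> {1, 2, 3}" using that by auto
    then have "((\<Sum>i<d. x ! i) + (\<Sum>i<d. odd_shift j i)) mod 4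
        = ((\<Sum>i<d. x ! i) mod 4 + (6 + 4 * (k - 1))) mod 4"
      using sum_odd_shift m by (metis mod_add_left_eq)
    then show ?thesis using assms(4) by (simp add: M4_shift)
  qed
  have zero: "shift d x (odd_shift 0) = x"
    using shift_zero[OF \<open>x \<in> idx d\<close>] by (simp add: odd_shift_def)
  show "\<forall>z\<in>?D. z = x \<or> M4 d z = 1"
  proof
    fix z assume "z \<in> ?D"
    then obtain j where "j < 4" "z = shift d x (odd_shift j)" by blast
    then show "z = x \<or> M4 d z = 1" using one zero by (cases "j = 0") auto
  qed
qed

lemma M4_diagonal_through:
  assumes "3 \<le> d" "x \<in> idx d" "(\<Sum>i<d. x ! i) mod 4 = 2"
  shows "\<exists>D\<in>diagonals d. \<forall>z\<in>D. z = x \<or> M4 d z = 1"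
proof (cases "even d")
  case True
  then obtain D where "D \<in> diagonals d" "\<forall>z\<in>D. M4 d z = 1"
    using M4_even_all_ones_diagonal[OF True] \<open>3 \<le> d\<close> by auto
  then show ?thesis by blast
next
  case False
  then show ?thesis using M4_odd_diagonal_through assms by blast
qed

lemma sum_list_update_nth:
  fixes g :: "nat \<Rightarrow> 'a \<Rightarrow> 'b::comm_monoid_add"
  assumes "i < d" "length \<alpha> = d"
  shows "(\<Sum>l<d. g l (\<alpha>[i := a] ! l)) + g i (\<alpha> ! i) = (\<Sum>l<d. g l (\<alpha> ! l)) + g i a"
proof -
  have i: "i \<in> {..<d}" using assms(1) by simp
  have "(\<Sum>l<d. g l (\<alpha>[i := a] ! l)) = g i a + (\<Sum>l\<in>{..<d} - {i}. g l (\<alpha> ! l))"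
    using sum.remove[OF finite_lessThan i, of "\<lambda>l. g l (\<alpha>[i := a] ! l)"] assms by simp
  moreover have "(\<Sum>l<d. g l (\<alpha> ! l)) = g i (\<alpha> ! i) + (\<Sum>l\<in>{..<d} - {i}. g l (\<alpha> ! l))"
    using sum.remove[OF finite_lessThan i] by simp
  ultimately show ?thesis by (simp add: ac_simps)
qed

lemma exists_mod_4_complement: "\<exists>u<4. (S + u) mod 4 = x mod (4::nat)"
proof (intro exI conjI)
  show "(x + 4 - S mod 4) mod 4 < 4" by simp
  have "(S + (x + 4 - S mod 4) mod 4) mod 4 = (S mod 4 + (x + 4 - S mod 4)) mod 4"
    by (metis mod_add_left_eq mod_add_right_eq)
  also have "S mod 4 + (x + 4 - S mod 4) = x + 4" by simp
  finally show "(S + (x + 4 - S mod 4) mod 4) mod 4 = x mod 4" by simp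
qed

lemma mod_4_eq_2_of_triple_shift:
  fixes S T :: nat
  assumes sum: "T + x 0 + x 1 + x 2 = S + u 0 + u 1 + u 2"
    and u: "\<And>l. (S + u l) mod 4 = x l mod 4" and "T mod 4 = 0" and "S mod 4 \<noteq> 0"
  shows "S mod 4 = 2"
proof -
  define X where "X = x 0 + x 1 + x 2"
  have eq: "X + (T + 2 * S) = (S + u 0) + (S + u 1) + (S + u 2)"
    using sum unfolding X_def by linarith
  have "((S + u 0) + (S + u 1) + (S + u 2)) mod 4 = X mod 4"
    unfolding X_def by (metis u mod_add_eq)
  then have "(X + (T + 2 * S)) mod 4 = (X + 0) mod 4"
    by (simp only: eq add_0_right)
  then have "(T + 2 * S) mod 4 = 0"
    unfolding mod_add_left_cancel_nat by simp
  then have "(2 * S) mod 4 = 0" using \<open>T mod 4 = 0\<close> by (metis mod_add_left_eq add_0)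
  with \<open>S mod 4 \<noteq> 0\<close> show ?thesis by presburger
qed

definition triple_closed :: "nat \<Rightarrow> (nat list \<Rightarrow> nat) \<Rightarrow> nat list \<Rightarrow> bool" where
  "triple_closed d A \<alpha> \<longleftrightarrow>
     (\<forall>i j k a b c. i < d \<longrightarrow> j < d \<longrightarrow> k < d \<longrightarrow> distinct [i, j, k] \<longrightarrow> a < 4 \<longrightarrow> b < 4 \<longrightarrow> c < 4 \<longrightarrow>
        A (\<alpha>[i := a]) = 1 \<longrightarrow> A (\<alpha>[j := b]) = 1 \<longrightarrow> A (\<alpha>[k := c]) = 1 \<longrightarrow>
        A (\<alpha>[i := a, j := b, k := c]) = 1)"

lemma M4_triple_closed_sum_mod_4:
  assumes x: "x \<in> idx d" and "3 \<le> d" and zero: "M4 d x = 0" and closed: "triple_closed d (M4 d) x"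
  shows "(\<Sum>i<d. x ! i) mod 4 = 2"
proof -
  define S where "S = (\<Sum>i<d. x ! i)"
  have len: "length x = d" using idx_length[OF x] .
  have S: "S mod 4 \<noteq> 0" using zero by (simp add: M4_def S_def split: if_splits)
  \<comment> \<open>Replacing \<open>x ! l\<close> by \<open>u l\<close> lowers the coordinate sum by \<open>S\<close> mod 4.\<close>
  have "\<forall>l. \<exists>v. v < 4 \<and> (S + v) mod 4 = x ! l mod 4"
    using exists_mod_4_complement by blast
  then obtain u where u: "\<And>l. u l < 4" "\<And>l. (S + u l) mod 4 = x ! l mod 4"
    by metis
  have sum_update: "(\<Sum>i<d. y[l := u l] ! i) + y ! l = (\<Sum>i<d. y ! i) + u l"
    if "l < d" "length y = d" for y l
    using sum_list_update_nth[OF that, of "\<lambda>_ v. v"] by simp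
  have one: "M4 d (x[l := u l]) = 1" if "l < d" for l
  proof -
    have "(x ! l + (\<Sum>i<d. x[l := u l] ! i)) mod 4 = (x ! l + 0) mod 4"
      using sum_update[OF that len] u(2) by (simp add: S_def add.commute)
    then show ?thesis unfolding mod_add_left_cancel_nat by (simp add: M4_def)
  qed
  define y where "y = x[0 := u 0, 1 := u 1, 2 := u 2]"
  have "M4 d y = 1"
    using closed one u(1) \<open>3 \<le> d\<close> by (simp add: triple_closed_def y_def)
  then have T: "(\<Sum>i<d. y ! i) mod 4 = 0" by (simp add: M4_def split: if_splits)
  have "(\<Sum>i<d. y ! i) + x ! 0 + x ! 1 + x ! 2 = S + u 0 + u 1 + u 2"
    using sum_update[of 0 x] sum_update[of 1 "x[0 := u 0]"] sum_update[of 2 "x[0 := u 0, 1 := u 1]"]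
      len \<open>3 \<le> d\<close> by (simp add: y_def S_def)
  then have "S mod 4 = 2"
    using mod_4_eq_2_of_triple_shift[where x="\<lambda>l. x ! l", OF _ u(2) T S] by blast
  then show ?thesis by (simp add: S_def)
qed

definition pf_sum :: "nat \<Rightarrow> nat list \<Rightarrow> nat list \<Rightarrow> nat" where
  "pf_sum d E \<alpha> = (\<Sum>i<d. pf (E ! i) (\<alpha> ! i))"

definition muf_sum :: "nat \<Rightarrow> nat list \<Rightarrow> nat list \<Rightarrow> nat" where
  "muf_sum d E \<alpha> = (\<Sum>i<d. muf (E ! i) (\<alpha> ! i))"

lemma block_perm_eq:
  "block_perm d E lam s \<alpha> =
     (if pf_sum d E \<alpha> mod 2 = s \<and> (muf_sum d E \<alpha> + lam (pvec d E \<alpha>)) mod 2 = 0 then 1 else 0)"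
  by (simp add: block_perm_def pf_sum_def muf_sum_def)

lemma pf_le_1: "pf e x \<le> 1"
  by (simp add: pf_def)

lemma muf_le_1: "muf e x \<le> 1"
  by (simp add: muf_def)

lemma pf_sum_eq_if_pvec_eq:
  assumes "pvec d E \<beta> = pvec d E \<alpha>"
  shows "pf_sum d E \<beta> = pf_sum d E \<alpha>"
proof -
  have "pf (E ! i) (\<beta> ! i) = pf (E ! i) (\<alpha> ! i)" if "i < d" for i
    using arg_cong[OF assms, of "\<lambda>xs. xs ! i"] that by (simp add: pvec_def)
  then show ?thesis by (simp add: pf_sum_def)
qed

lemma block_perm_same_subcube:
  assumes "pvec d E \<beta> = pvec d E \<alpha>" "pf_sum d E \<alpha> mod 2 = s" "block_perm d E lam s \<alpha> = 0"
  shows "block_perm d E lam s \<beta> = 1 \<longleftrightarrow> odd (muf_sum d E \<beta> + muf_sum d E \<alpha>)"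
proof -
  have "(muf_sum d E \<alpha> + lam (pvec d E \<alpha>)) mod 2 = 1"
    using assms(2,3) by (simp add: block_perm_eq split: if_splits)
  moreover have "block_perm d E lam s \<beta> = 1 \<longleftrightarrow> (muf_sum d E \<beta> + lam (pvec d E \<alpha>)) mod 2 = 0"
    using assms(1,2) pf_sum_eq_if_pvec_eq[OF assms(1)] by (simp add: block_perm_eq)
  ultimately show ?thesis by presburger
qed

lemma pvec_list_update_same:
  assumes "pf (E ! t) v = pf (E ! t) (\<alpha> ! t)"
  shows "pvec d E (\<alpha>[t := v]) = pvec d E \<alpha>"
  using assms by (cases "t < length \<alpha>") (auto simp: pvec_def nth_list_update list_update_beyond)

lemma muf_sum_list_update:
  "t < d \<Longrightarrow> length \<alpha> = d \<Longrightarrow>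
    muf_sum d E (\<alpha>[t := v]) + muf (E ! t) (\<alpha> ! t) = muf_sum d E \<alpha> + muf (E ! t) v"
  unfolding muf_sum_def using sum_list_update_nth[of t d \<alpha> "\<lambda>l. muf (E ! l)"] by simp

lemma block_perm_list_update_eq_1D:
  assumes \<alpha>: "\<alpha> \<in> idx d" and "pf_sum d E \<alpha> mod 2 = s" "block_perm d E lam s \<alpha> = 0"
    and t: "t < d" and one: "block_perm d E lam s (\<alpha>[t := v]) = 1"
  shows "pf (E ! t) v = pf (E ! t) (\<alpha> ! t)" "muf (E ! t) v + muf (E ! t) (\<alpha> ! t) = 1"
proof -
  have len: "length \<alpha> = d" using idx_length[OF \<alpha>] .
  have "pf_sum d E (\<alpha>[t := v]) mod 2 = s" using one by (simp add: block_perm_eq split: if_splits)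
  moreover have "pf_sum d E (\<alpha>[t := v]) + pf (E ! t) (\<alpha> ! t) = pf_sum d E \<alpha> + pf (E ! t) v"
    unfolding pf_sum_def using sum_list_update_nth[OF t len, of "\<lambda>l. pf (E ! l)"] by simp
  ultimately show pf: "pf (E ! t) v = pf (E ! t) (\<alpha> ! t)"
    using assms(2) pf_le_1[of "E ! t" v] pf_le_1[of "E ! t" "\<alpha> ! t"] by presburger
  have "odd (muf_sum d E (\<alpha>[t := v]) + muf_sum d E \<alpha>)"
    using block_perm_same_subcube[OF pvec_list_update_same[OF pf] assms(2,3)] one by simp
  moreover note muf_sum_list_update[OF t len, of E v]
  ultimately show "muf (E ! t) v + muf (E ! t) (\<alpha> ! t) = 1"
    using muf_le_1[of "E ! t" v] muf_le_1[of "E ! t" "\<alpha> ! t"] by presburger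
qed

lemma triple_closed_block_perm:
  assumes A: "\<forall>\<beta>\<in>idx d. A \<beta> = block_perm d E lam s \<beta>"
    and \<alpha>: "\<alpha> \<in> idx d" and s: "pf_sum d E \<alpha> mod 2 = s" and zero: "A \<alpha> = 0"
  shows "triple_closed d A \<alpha>"
  unfolding triple_closed_def
proof (intro allI impI)
  fix i j k a b c
  assume ijk: "i < d" "j < d" "k < d" "distinct [i, j, k]" and abc: "a < 4" "b < 4" "c < 4"
    and ones: "A (\<alpha>[i := a]) = 1" "A (\<alpha>[j := b]) = 1" "A (\<alpha>[k := c]) = 1"
  have zero': "block_perm d E lam s \<alpha> = 0" using A \<alpha> zero by simp
  have len: "length \<alpha> = d" using idx_length[OF \<alpha>] .
  have flip: "pf (E ! t) v = pf (E ! t) (\<alpha> ! t)" "muf (E ! t) v + muf (E ! t) (\<alpha> ! t) = 1"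
    if "t < d" "v < 4" "A (\<alpha>[t := v]) = 1" for t v
    using block_perm_list_update_eq_1D[OF \<alpha> s zero' that(1)] that A idx_list_update[OF \<alpha>] by auto
  let ?\<gamma> = "\<alpha>[i := a, j := b, k := c]"
  have nth: "\<alpha>[i := a] ! j = \<alpha> ! j" "\<alpha>[i := a, j := b] ! k = \<alpha> ! k"
    using ijk by auto
  have "pvec d E ?\<gamma> = pvec d E \<alpha>"
    using flip(1)[OF ijk(1) abc(1) ones(1)] flip(1)[OF ijk(2) abc(2) ones(2)]
      flip(1)[OF ijk(3) abc(3) ones(3)] nth
    by (simp add: pvec_list_update_same)
  moreover have "odd (muf_sum d E ?\<gamma> + muf_sum d E \<alpha>)"
    using muf_sum_list_update[OF ijk(1) len, of E a]
      muf_sum_list_update[OF ijk(2), of "\<alpha>[i := a]" E b]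
      muf_sum_list_update[OF ijk(3), of "\<alpha>[i := a, j := b]" E c]
      flip(2)[OF ijk(1) abc(1) ones(1)] flip(2)[OF ijk(2) abc(2) ones(2)]
      flip(2)[OF ijk(3) abc(3) ones(3)] nth len
    by simp presburger
  ultimately have "block_perm d E lam s ?\<gamma> = 1"
    using block_perm_same_subcube[OF _ s zero'] by blast
  moreover have "?\<gamma> \<in> idx d" using \<alpha> abc by (simp add: idx_list_update)
  ultimately show "A ?\<gamma> = 1" using A by simp
qed

lemma triple_closed_relabel:
  assumes rel: "is_relabelling d \<pi> f"
    and A: "\<forall>\<alpha>\<in>idx d. A \<alpha> = M4 d (relabel d \<pi> f \<alpha>)"
    and \<alpha>: "\<alpha> \<in> idx d" and closed: "triple_closed d A \<alpha>"
  shows "triple_closed d (M4 d) (relabel d \<pi> f \<alpha>)"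
  unfolding triple_closed_def
proof (intro allI impI)
  let ?T = "relabel d \<pi> f"
  fix i j k a b c
  assume ijk: "i < d" "j < d" "k < d" "distinct [i, j, k]" and abc: "a < 4" "b < 4" "c < 4"
    and ones: "M4 d ((?T \<alpha>)[i := a]) = 1" "M4 d ((?T \<alpha>)[j := b]) = 1" "M4 d ((?T \<alpha>)[k := c]) = 1"
  have \<pi>: "\<pi> permutes {..<d}" "inj \<pi>" and f: "\<And>l. l < d \<Longrightarrow> f l permutes {..<4}"
    using rel permutes_inj by (auto simp: is_relabelling_def)
  define pre where "pre l v = inv (f l) v" for l v
  have pre: "pre l v < 4" "f l (pre l v) = v" if "l < d" "v < 4" for l v
    using permutes_lessThan_less[OF permutes_inv[OF f]] permutes_inverses(1)[OF f] that
    by (auto simp: pre_def)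
  have len: "length \<alpha> = d" using idx_length[OF \<alpha>] .
  have upd: "?T (\<beta>[\<pi> l := pre l v]) = (?T \<beta>)[l := v]" if "length \<beta> = d" "l < d" "v < 4" for \<beta> l v
    using relabel_list_update[OF rel that(1,2)] pre(2)[OF that(2,3)] by simp
  have single: "A (\<alpha>[\<pi> l := pre l v]) = 1" if "l < d" "v < 4" "M4 d ((?T \<alpha>)[l := v]) = 1" for l v
    using A idx_list_update[OF \<alpha> pre(1)] upd[OF len] that by simp
  have "A (\<alpha>[\<pi> i := pre i a, \<pi> j := pre j b, \<pi> k := pre k c]) = 1"
  proof (rule closed[unfolded triple_closed_def, rule_format])
    show "\<pi> i < d" "\<pi> j < d" "\<pi> k < d" using ijk permutes_lessThan_less[OF \<pi>(1)] by auto
    show "distinct [\<pi> i, \<pi> j, \<pi> k]" using ijk \<pi>(2) by (auto simp: inj_eq)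
    show "pre i a < 4" "pre j b < 4" "pre k c < 4" using ijk abc pre(1) by auto
    show "A (\<alpha>[\<pi> i := pre i a]) = 1" "A (\<alpha>[\<pi> j := pre j b]) = 1" "A (\<alpha>[\<pi> k := pre k c]) = 1"
      using single ijk abc ones by auto
  qed
  moreover have "\<alpha>[\<pi> i := pre i a, \<pi> j := pre j b, \<pi> k := pre k c] \<in> idx d"
    using \<alpha> ijk abc pre(1) by (simp add: idx_list_update)
  moreover have "?T (\<alpha>[\<pi> i := pre i a, \<pi> j := pre j b, \<pi> k := pre k c]) = (?T \<alpha>)[i := a, j := b, k := c]"
    using ijk abc len by (simp add: upd)
  ultimately show "M4 d ((?T \<alpha>)[i := a, j := b, k := c]) = 1" using A by simp
qed

theorem mainTheorem10:
  fixes d :: nat and A :: "nat list \<Rightarrow> nat" and E :: "nat list" and lam :: "nat list \<Rightarrow> nat"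
    and s :: nat and y :: "nat list" and \<alpha>0 :: "nat list"
  assumes "d \<ge> 3"
    and "equivM4 d A"
    and "valid_params d E lam s"
    and "\<forall>\<alpha>\<in>idx d. A \<alpha> = block_perm d E lam s \<alpha>"
    and "filled d s y"
    and "\<alpha>0 \<in> subcube d E y"
    and "A \<alpha>0 = 0"
  shows "per d (A(\<alpha>0 := 1)) > 0"
proof -
  obtain \<pi> f where rel: "is_relabelling d \<pi> f"
    and A: "\<forall>\<alpha>\<in>idx d. A \<alpha> = M4 d (relabel d \<pi> f \<alpha>)"
    using equivM4_relabel[OF assms(2)] by blast
  let ?x0 = "relabel d \<pi> f \<alpha>0"
  have \<alpha>0: "\<alpha>0 \<in> idx d" using assms(6) by (simp add: subcube_def)
  have "pf_sum d E \<alpha>0 mod 2 = s"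
    using assms(5,6) by (simp add: pf_sum_def subcube_def filled_def)
  then have "triple_closed d (M4 d) ?x0"
    using triple_closed_relabel[OF rel A \<alpha>0] triple_closed_block_perm[OF assms(4) \<alpha>0 _ assms(7)]
    by blast
  moreover have "M4 d ?x0 = 0" using A \<alpha>0 assms(7) by simp
  ultimately have "(\<Sum>i<d. ?x0 ! i) mod 4 = 2"
    using M4_triple_closed_sum_mod_4[OF relabel_in_idx[OF rel \<alpha>0] \<open>d \<ge> 3\<close>] by blast
  then obtain D where "D \<in> diagonals d" "\<forall>z\<in>D. z = ?x0 \<or> M4 d z = 1"
    using M4_diagonal_through[OF \<open>d \<ge> 3\<close> relabel_in_idx[OF rel \<alpha>0]] by blast
  then show ?thesis using per_update_pos_of_relabelled_diagonal[OF rel A \<alpha>0] by blast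
qed

end
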